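(* Let $n\ge3$, $\rho\in[0,1]$ and $\alpha\in[0,\tfrac{\pi}{2}]$. Then $$\int_{-1}^1 \frac{(1-x^2)^{\frac{n-3}{2}}}{(1+\rho^2-2\rho x \cos\alpha)^{\frac{n}{2}-1}}\, {}_2 F_1\Big(\tfrac{n-2}{4}, \tfrac{n}{4};\tfrac{n-1}{2}; \tfrac{4\rho^2 \sin^2\alpha\, (1-x^2)}{(1+\rho^2-2\rho x \cos\alpha)^2}\Big)\, dx=\int_{-1}^1 (1-x^2)^{\frac{n-3}{2}} (1-2\rho x + \rho^2)^{1-\frac{n}{2}}\, dx.$$
   Context: ${}_2F_1$ is the Gauss hypergeometric function. *)

theory Defs
  imports "HOL-Analysis.Analysis"
begin

text \<open>Gauss hypergeometric function as its power series
  sum over k of (a)_k (b)_k / ((c)_k k!) z^k (meaningful for abs z < 1).\<close>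
definition hyp2F1 :: "real \<Rightarrow> real \<Rightarrow> real \<Rightarrow> real \<Rightarrow> real" where
  "hyp2F1 a b c z =
     (\<Sum>k. pochhammer a k * pochhammer b k / (pochhammer c k * fact k) * z ^ k)"

end

theory Submission
  imports Defs
begin

text \<open>
  Put \<open>v = n / 2 - 1\<close> and, for a point \<open>p = (t, s)\<close> of the plane, integrate
  \<open>(1 - |q|\<^sup>2) powr (v - 1) * (1 + |p|\<^sup>2 - 2 p \<bullet> q) powr (- v)\<close> over the unit disc.
  Rotation invariance of Lebesgue measure shows that this integral depends only on \<open>|p| = \<rho>\<close>.
  On the other hand, on the chord \<open>q = (x, Y)\<close> the second factor is \<open>(A - 2 s Y) powr (- v)\<close> with
  \<open>A = 1 + |p|\<^sup>2 - 2 t x\<close>. Expanding it in its binomial series, the odd terms cancel by symmetry and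
  each even term is a Beta integral, so the integral over the chord resums to \<open>B(1/2, v)\<close> times a
  \<open>\<^sub>2F\<^sub>1\<close> profile in \<open>x\<close>. For \<open>p = \<rho> (cos \<alpha>, sin \<alpha>)\<close> this profile is the integrand on the left,
  and for \<open>p = (\<rho>, 0)\<close> the hypergeometric argument vanishes and it is the integrand on the right.
\<close>

section \<open>Rotation invariance of Lebesgue measure on the plane\<close>

lemma nn_integral_lborel_shear_snd:
  fixes f :: "real \<times> real \<Rightarrow> ennreal"
  assumes [measurable]: "f \<in> borel_measurable borel"
  shows "(\<integral>\<^sup>+z. f (fst z, snd z + a * fst z) \<partial>lborel) = (\<integral>\<^sup>+z. f z \<partial>lborel)"
proof -
  have "(\<integral>\<^sup>+z. f (fst z, snd z + a * fst z) \<partial>lborel)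
        = (\<integral>\<^sup>+z. f (fst z, snd z + a * fst z) \<partial>(lborel \<Otimes>\<^sub>M lborel))"
    by (simp add: lborel_prod)
  also have "\<dots> = (\<integral>\<^sup>+x. \<integral>\<^sup>+y. f (x, y + a * x) \<partial>lborel \<partial>lborel)"
    by (subst lborel.nn_integral_fst[symmetric]) auto
  also have "\<dots> = (\<integral>\<^sup>+x. \<integral>\<^sup>+y. f (x, y) \<partial>lborel \<partial>lborel)"
    by (rule nn_integral_cong)
      (use nn_integral_real_affine[of "\<lambda>y. f (x, y)" 1 "a * x" for x] in \<open>simp add: add.commute\<close>)
  also have "\<dots> = (\<integral>\<^sup>+z. f z \<partial>(lborel \<Otimes>\<^sub>M lborel))"
    by (subst lborel.nn_integral_fst[symmetric]) (auto simp: lborel_prod measurable_lborel1)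
  also have "\<dots> = (\<integral>\<^sup>+z. f z \<partial>lborel)"
    by (simp add: lborel_prod)
  finally show ?thesis .
qed

lemma nn_integral_lborel_shear_fst:
  fixes f :: "real \<times> real \<Rightarrow> ennreal"
  assumes [measurable]: "f \<in> borel_measurable borel"
  shows "(\<integral>\<^sup>+z. f (fst z + a * snd z, snd z) \<partial>lborel) = (\<integral>\<^sup>+z. f z \<partial>lborel)"
proof -
  have "(\<integral>\<^sup>+z. f (fst z + a * snd z, snd z) \<partial>lborel)
        = (\<integral>\<^sup>+z. f (fst z + a * snd z, snd z) \<partial>(lborel \<Otimes>\<^sub>M lborel))"
    by (simp add: lborel_prod)
  also have "\<dots> = (\<integral>\<^sup>+y. \<integral>\<^sup>+x. f (x + a * y, y) \<partial>lborel \<partial>lborel)"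
    by (subst lborel_pair.nn_integral_snd[symmetric]) auto
  also have "\<dots> = (\<integral>\<^sup>+y. \<integral>\<^sup>+x. f (x, y) \<partial>lborel \<partial>lborel)"
    by (rule nn_integral_cong)
      (use nn_integral_real_affine[of "\<lambda>x. f (x, y)" 1 "a * y" for y] in \<open>simp add: add.commute\<close>)
  also have "\<dots> = (\<integral>\<^sup>+z. f z \<partial>(lborel \<Otimes>\<^sub>M lborel))"
    by (subst lborel_pair.nn_integral_snd[symmetric]) (auto simp: lborel_prod measurable_lborel1)
  also have "\<dots> = (\<integral>\<^sup>+z. f z \<partial>lborel)"
    by (simp add: lborel_prod)
  finally show ?thesis .
qed

definition rotate2 :: "real \<Rightarrow> real \<times> real \<Rightarrow> real \<times> real" where
  "rotate2 \<theta> q = (cos \<theta> * fst q - sin \<theta> * snd q, sin \<theta> * fst q + cos \<theta> * snd q)"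

lemma rotate2_add: "rotate2 (\<theta> + \<phi>) q = rotate2 \<theta> (rotate2 \<phi> q)"
  by (simp add: rotate2_def cos_add sin_add algebra_simps)

lemma inner_rotate2 [simp]: "rotate2 \<theta> p \<bullet> rotate2 \<theta> q = p \<bullet> q"
proof -
  have "rotate2 \<theta> p \<bullet> rotate2 \<theta> q = (fst p * fst q + snd p * snd q) * ((sin \<theta>)\<^sup>2 + (cos \<theta>)\<^sup>2)"
    unfolding rotate2_def inner_prod_def inner_real_def fst_conv snd_conv by algebra
  then show ?thesis by (simp add: inner_prod_def)
qed

lemma norm_rotate2 [simp]: "norm (rotate2 \<theta> q) = norm q"
  by (metis inner_rotate2 norm_eq_sqrt_inner)

lemma rotate2_measurable [measurable]: "rotate2 \<theta> \<in> borel_measurable borel"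
  unfolding rotate2_def by (simp add: borel_prod[symmetric]) measurable

text \<open>For \<open>cos \<theta> \<noteq> -1\<close> the rotation is a product of three shears, with \<open>u = - tan (\<theta> / 2)\<close>.\<close>

lemma nn_integral_lborel_rotate2_aux:
  fixes f :: "real \<times> real \<Rightarrow> ennreal"
  assumes [measurable]: "f \<in> borel_measurable borel" and cos: "cos \<theta> > -1"
  shows "(\<integral>\<^sup>+z. f (rotate2 \<theta> z) \<partial>lborel) = (\<integral>\<^sup>+z. f z \<partial>lborel)"
proof -
  define u where "u = - sin \<theta> / (1 + cos \<theta>)"
  define shear_fst where "shear_fst z = (fst z + u * snd z, snd z)" for z :: "real \<times> real"
  define shear_snd where "shear_snd z = (fst z, snd z + sin \<theta> * fst z)" for z :: "real \<times> real"
  have [measurable]: "shear_fst \<in> borel_measurable borel" "shear_snd \<in> borel_measurable borel"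
    unfolding shear_fst_def shear_snd_def by (simp_all add: borel_prod[symmetric])
  have nonzero: "1 + cos \<theta> \<noteq> 0"
    using cos by simp
  have "(cos \<theta> - 1) * (1 + cos \<theta>) = - (sin \<theta>)\<^sup>2"
    using sin_cos_squared_add[of \<theta>] by (simp add: algebra_simps power2_eq_square)
  then have u_sin: "u * sin \<theta> = cos \<theta> - 1"
    using nonzero by (simp add: u_def field_simps power2_eq_square)
  have u_cos: "u * (1 + cos \<theta>) = - sin \<theta>"
    using nonzero by (simp add: u_def)
  have "rotate2 \<theta> z = shear_fst (shear_snd (shear_fst z))" for z
  proof -
    have "fst z + u * snd z + u * (snd z + sin \<theta> * (fst z + u * snd z))
          = (1 + u * sin \<theta>) * fst z + u * (1 + (1 + u * sin \<theta>)) * snd z"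
      "snd z + sin \<theta> * (fst z + u * snd z) = sin \<theta> * fst z + (1 + u * sin \<theta>) * snd z"
      by (simp_all add: algebra_simps)
    then show ?thesis
      by (simp add: rotate2_def shear_fst_def shear_snd_def u_sin u_cos)
  qed
  then have "(\<integral>\<^sup>+z. f (rotate2 \<theta> z) \<partial>lborel) = (\<integral>\<^sup>+z. f (shear_fst (shear_snd (shear_fst z))) \<partial>lborel)"
    by simp
  also have "\<dots> = (\<integral>\<^sup>+z. f (shear_fst (shear_snd z)) \<partial>lborel)"
    using nn_integral_lborel_shear_fst[of "\<lambda>z. f (shear_fst (shear_snd z))" u]
    by (simp only: shear_fst_def[symmetric]) measurable
  also have "\<dots> = (\<integral>\<^sup>+z. f (shear_fst z) \<partial>lborel)"
    using nn_integral_lborel_shear_snd[of "\<lambda>z. f (shear_fst z)" "sin \<theta>"]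
    by (simp only: shear_snd_def[symmetric]) measurable
  also have "\<dots> = (\<integral>\<^sup>+z. f z \<partial>lborel)"
    using nn_integral_lborel_shear_fst[OF assms(1), of u] by (simp only: shear_fst_def[symmetric])
  finally show ?thesis .
qed

lemma nn_integral_lborel_rotate2:
  fixes f :: "real \<times> real \<Rightarrow> ennreal"
  assumes [measurable]: "f \<in> borel_measurable borel"
  shows "(\<integral>\<^sup>+z. f (rotate2 \<theta> z) \<partial>lborel) = (\<integral>\<^sup>+z. f z \<partial>lborel)"
proof (cases "cos \<theta> > -1")
  case True
  then show ?thesis by (rule nn_integral_lborel_rotate2_aux[OF assms])
next
  case False
  txt \<open>A half-turn is the square of a quarter-turn.\<close>
  then have "cos \<theta> = -1" using cos_ge_minus_one[of \<theta>] by linarith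
  then have "cos (\<theta> / 2) = 0"
    using cos_double_cos[of "\<theta> / 2"] by simp
  then have half: "cos (\<theta> / 2) > -1" by simp
  have "(\<integral>\<^sup>+z. f (rotate2 \<theta> z) \<partial>lborel) = (\<integral>\<^sup>+z. f (rotate2 (\<theta> / 2) (rotate2 (\<theta> / 2) z)) \<partial>lborel)"
    by (simp flip: rotate2_add)
  also have "\<dots> = (\<integral>\<^sup>+z. f (rotate2 (\<theta> / 2) z) \<partial>lborel)"
    by (rule nn_integral_lborel_rotate2_aux[OF _ half]) measurable
  also have "\<dots> = (\<integral>\<^sup>+z. f z \<partial>lborel)"
    by (rule nn_integral_lborel_rotate2_aux[OF assms half])
  finally show ?thesis .
qed

section \<open>Symmetric intervals and Henstock--Kurzweil integrals\<close>

lemma nn_integral_reflect_symmetric_interval: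
  fixes f :: "real \<Rightarrow> ennreal"
  assumes [measurable]: "f \<in> borel_measurable borel"
  shows "(\<integral>\<^sup>+x\<in>{-r<..<r}. f (- x) \<partial>lborel) = (\<integral>\<^sup>+x\<in>{-r<..<r}. f x \<partial>lborel)"
proof -
  have "indicator {-r<..<r} (- x) = (indicator {-r<..<r} x :: ennreal)" for x
    by (auto simp: indicator_def)
  then show ?thesis
    using nn_integral_real_affine[of "\<lambda>x. f x * indicator {-r<..<r} x" "-1" 0] by simp
qed

lemma nn_integral_even_symmetric_interval:
  fixes h :: "real \<Rightarrow> ennreal"
  assumes [measurable]: "h \<in> borel_measurable borel" and even: "\<And>x. h (- x) = h x"
  shows "(\<integral>\<^sup>+x\<in>{-r<..<r}. h x \<partial>lborel) = 2 * (\<integral>\<^sup>+x\<in>{0..r}. h x \<partial>lborel)"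
proof -
  have pos_part: "(\<integral>\<^sup>+x\<in>{-r<..<r}. h x * indicator {0<..} x \<partial>lborel) = (\<integral>\<^sup>+x\<in>{0..r}. h x \<partial>lborel)"
  proof (rule nn_integral_cong_AE)
    show "AE x in lborel. h x * indicator {0<..} x * indicator {-r<..<r} x = h x * indicator {0..r} x"
      using AE_lborel_singleton[of 0] AE_lborel_singleton[of r]
      by eventually_elim (auto simp: indicator_def)
  qed
  have "(\<integral>\<^sup>+x\<in>{-r<..<r}. h x \<partial>lborel)
        = (\<integral>\<^sup>+x\<in>{-r<..<r}. h x * indicator {..<0} x + h x * indicator {0<..} x \<partial>lborel)"
  proof (rule nn_integral_cong_AE)
    show "AE x in lborel. h x * indicator {-r<..<r} x
                          = (h x * indicator {..<0} x + h x * indicator {0<..} x) * indicator {-r<..<r} x"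
      using AE_lborel_singleton[of 0] by eventually_elim (auto simp: indicator_def)
  qed
  also have "\<dots> = (\<integral>\<^sup>+x\<in>{-r<..<r}. h x * indicator {..<0} x \<partial>lborel)
                  + (\<integral>\<^sup>+x\<in>{-r<..<r}. h x * indicator {0<..} x \<partial>lborel)"
    by (subst nn_integral_add[symmetric]) (simp_all add: distrib_right)
  also have "(\<integral>\<^sup>+x\<in>{-r<..<r}. h x * indicator {..<0} x \<partial>lborel)
             = (\<integral>\<^sup>+x\<in>{-r<..<r}. h (- x) * indicator {..<0} (- x) \<partial>lborel)"
    by (rule nn_integral_reflect_symmetric_interval[symmetric]) measurable
  also have "\<dots> = (\<integral>\<^sup>+x\<in>{-r<..<r}. h x * indicator {0<..} x \<partial>lborel)"
  proof -
    have "indicator {..<0} (- x) = (indicator {0<..} x :: ennreal)" for x :: real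
      by (simp add: indicator_def)
    then show ?thesis by (simp add: even)
  qed
  finally show ?thesis
    by (simp only: pos_part mult_2)
qed

text \<open>No integrability hypothesis is needed: if the nonnegative integral is infinite, \<open>f\<close> is not
  integrable on \<open>S\<close> and both sides are \<open>0\<close>.\<close>

lemma integral_eq_enn2real_nn_integral:
  fixes f :: "'a::euclidean_space \<Rightarrow> real"
  assumes meas: "(\<lambda>x. indicator S x * f x) \<in> borel_measurable borel"
    and nonneg: "AE x in lborel. x \<in> S \<longrightarrow> 0 \<le> f x"
  shows "integral S f = enn2real (\<integral>\<^sup>+x\<in>S. ennreal (f x) \<partial>lborel)"
proof -
  define g where "g x = max 0 (indicator S x * f x)" for x
  have g_meas: "g \<in> borel_measurable borel"
    unfolding g_def using meas by measurable
  have g_nonneg: "0 \<le> g x" for x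
    by (simp add: g_def)
  have restrict: "(\<lambda>x. if x \<in> S then max 0 (f x) else 0) = g"
    by (auto simp: g_def indicator_def)
  have "AE x in lborel. x \<in> S \<longrightarrow> f x = max 0 (f x)"
    using nonneg by eventually_elim auto
  then have "(f has_integral y) S \<longleftrightarrow> ((\<lambda>x. max 0 (f x)) has_integral y) S" for y
    by (rule has_integral_AE)
  then have "(f has_integral y) S \<longleftrightarrow> (g has_integral y) UNIV" for y
    unfolding restrict[symmetric] has_integral_restrict_UNIV .
  then have "integral S f = integral UNIV g"
    by (simp add: integral_def integrable_on_def)
  moreover have "(\<integral>\<^sup>+x\<in>S. ennreal (f x) \<partial>lborel) = (\<integral>\<^sup>+x. ennreal (g x) \<partial>lborel)"
    by (rule nn_integral_cong) (simp add: g_def ennreal_max_0 indicator_def)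
  moreover have "integral UNIV g = enn2real (\<integral>\<^sup>+x. ennreal (g x) \<partial>lborel)"
  proof (cases "g integrable_on UNIV")
    case True
    then show ?thesis
      using nn_integral_has_integral_lborel[OF g_meas g_nonneg integrable_integral] g_nonneg
      by (simp add: integral_nonneg)
  next
    case False
    have "(\<integral>\<^sup>+x. ennreal (g x) \<partial>lborel) = \<infinity>"
    proof (rule ccontr)
      assume "(\<integral>\<^sup>+x. ennreal (g x) \<partial>lborel) \<noteq> \<infinity>"
      then obtain r where "(\<integral>\<^sup>+x. ennreal (g x) \<partial>lborel) = ennreal r" "0 \<le> r"
        by (cases "\<integral>\<^sup>+x. ennreal (g x) \<partial>lborel" rule: ennreal_cases) auto
      with False show False
        using nn_integral_has_integral[OF g_meas g_nonneg] by blast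
    qed
    with False show ?thesis by (simp add: not_integrable_integral)
  qed
  ultimately show ?thesis by simp
qed

section \<open>The hypergeometric series\<close>

definition hyp2F1_coeff :: "real \<Rightarrow> real \<Rightarrow> real \<Rightarrow> nat \<Rightarrow> real" where
  "hyp2F1_coeff a b c k = pochhammer a k * pochhammer b k / (pochhammer c k * fact k)"

lemma hyp2F1_altdef: "hyp2F1 a b c z = (\<Sum>k. hyp2F1_coeff a b c k * z ^ k)"
  by (simp add: hyp2F1_def hyp2F1_coeff_def)

lemma hyp2F1_at_0 [simp]: "hyp2F1 a b c 0 = 1"
  using powser_zero[of "hyp2F1_coeff a b c"] by (simp add: hyp2F1_altdef hyp2F1_coeff_def)

lemma hyp2F1_measurable [measurable (raw)]:
  assumes [measurable]: "f \<in> borel_measurable M"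
  shows "(\<lambda>x. hyp2F1 a b c (f x)) \<in> borel_measurable M"
  unfolding hyp2F1_def by measurable

lemma hyp2F1_coeff_nonneg: "0 < a \<Longrightarrow> 0 < b \<Longrightarrow> 0 < c \<Longrightarrow> 0 \<le> hyp2F1_coeff a b c k"
  unfolding hyp2F1_coeff_def by (intro divide_nonneg_nonneg mult_nonneg_nonneg pochhammer_nonneg) auto

lemma hyp2F1_coeff_Suc:
  assumes "c > 0"
  shows "hyp2F1_coeff a b c (Suc k) = hyp2F1_coeff a b c k * ((a + k) * (b + k) / ((c + k) * (k + 1)))"
proof -
  have "pochhammer c k > 0" using assms by (intro pochhammer_pos) auto
  then show ?thesis
    by (simp add: hyp2F1_coeff_def pochhammer_Suc field_simps)
qed

lemma summable_hyp2F1: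
  assumes "0 < a" "0 < b" "0 < c" "a + b \<le> c" and z: "\<bar>z\<bar> < 1"
  shows "summable (\<lambda>k. hyp2F1_coeff a b c k * z ^ k)"
proof (rule summable_ratio_test[where c = "\<bar>z\<bar>" and N = "nat \<lceil>a * b\<rceil>"])
  fix k :: nat
  assume "k \<ge> nat \<lceil>a * b\<rceil>"
  then have "a * b \<le> k" by linarith
  moreover have "(a + b) * k \<le> c * k"
    using assms by (intro mult_right_mono) auto
  ultimately have "(a + k) * (b + k) \<le> (c + k) * (k + 1)"
    using assms by (simp add: algebra_simps)
  then have ratio: "(a + k) * (b + k) / ((c + k) * (k + 1)) \<le> 1"
    using assms by (simp add: divide_le_eq_1)
  have "\<bar>hyp2F1_coeff a b c (Suc k)\<bar> \<le> \<bar>hyp2F1_coeff a b c k\<bar>"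
    using mult_left_mono[OF ratio hyp2F1_coeff_nonneg[of a b c k]] assms
    by (simp add: hyp2F1_coeff_Suc hyp2F1_coeff_nonneg)
  then have "\<bar>z\<bar> * (\<bar>hyp2F1_coeff a b c (Suc k)\<bar> * \<bar>z\<bar> ^ k) \<le> \<bar>z\<bar> * (\<bar>hyp2F1_coeff a b c k\<bar> * \<bar>z\<bar> ^ k)"
    by (intro mult_left_mono mult_right_mono) auto
  then show "norm (hyp2F1_coeff a b c (Suc k) * z ^ Suc k) \<le> \<bar>z\<bar> * norm (hyp2F1_coeff a b c k * z ^ k)"
    by (simp add: abs_mult power_abs mult_ac)
qed (use z in simp)

lemma hyp2F1_nonneg:
  assumes "0 < a" "0 < b" "0 < c" "a + b \<le> c" "0 \<le> z" "z < 1"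
  shows "0 \<le> hyp2F1 a b c z"
  unfolding hyp2F1_altdef
  using assms by (intro suminf_nonneg summable_hyp2F1) (auto intro!: mult_nonneg_nonneg hyp2F1_coeff_nonneg)

lemma binomial_series_even_part:
  fixes v A y :: real
  assumes "\<bar>y\<bar> < A"
  shows "(\<lambda>k. pochhammer v (2 * k) / fact (2 * k) * A powr (- v) * (y / A) ^ (2 * k)) sums
           (((A - y) powr (- v) + (A + y) powr (- v)) / 2)"
proof -
  have A: "A > 0" using assms by linarith
  define b where "b n = pochhammer v n / fact n * A powr (- v) * (y / A) ^ n" for n
  have binomial_term: "((- v) gchoose n) * A powr (- v - real n) * (c * y) ^ n = (- c) ^ n * b n" for n c
    using A by (simp add: b_def gbinomial_pochhammer powr_diff powr_realpow power_mult_distrib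
        power_divide power_minus[of c])
  have "(\<lambda>n. (- 1) ^ n * b n) sums ((A + y) powr (- v))"
    using gen_binomial_real''[OF assms, of "- v"] binomial_term[of _ 1] by simp
  moreover have "b sums ((A - y) powr (- v))"
    using gen_binomial_real''[of "- y" A "- v"] assms binomial_term[of _ "- 1"] by simp
  ultimately have "(\<lambda>n. (b n + (- 1) ^ n * b n) / 2) sums (((A - y) powr (- v) + (A + y) powr (- v)) / 2)"
    by (intro sums_divide sums_add)
  moreover have "(b n + (- 1) ^ n * b n) / 2 = (if even n then b n else 0)" for n
    by simp
  ultimately have "(\<lambda>n. if even n then b n else 0) sums (((A - y) powr (- v) + (A + y) powr (- v)) / 2)"
    by simp
  then have "(\<lambda>k. if even (2 * k) then b (2 * k) else 0) sums (((A - y) powr (- v) + (A + y) powr (- v)) / 2)"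
    by (subst sums_mono_reindex) (auto simp: strict_mono_def elim!: oddE)
  then show ?thesis by (simp add: b_def)
qed

lemma pochhammer_double_div_fact:
  fixes v :: real
  shows "pochhammer v (2 * k) / fact (2 * k) * pochhammer (1 / 2) k
         = pochhammer (v / 2) k * pochhammer ((v + 1) / 2) k / fact k"
proof -
  have v: "pochhammer v (2 * k) = 2 ^ (2 * k) * pochhammer (v / 2) k * pochhammer ((v + 1) / 2) k"
    using pochhammer_double[of "v / 2" k] by (simp add: add_divide_distrib)
  have fact: "(fact (2 * k) :: real) = 2 ^ (2 * k) * pochhammer (1 / 2) k * fact k"
    using pochhammer_double[of "1 / 2 :: real" k] by (simp add: pochhammer_fact)
  have "pochhammer (1 / 2 :: real) k > 0" by (rule pochhammer_pos) simp
  then show ?thesis unfolding v fact by simp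
qed

lemma Beta_add_nat_left:
  fixes a b :: real
  assumes "a > 0" "b > 0"
  shows "Beta (a + real k) b = Beta a b * pochhammer a k / pochhammer (a + b) k"
proof -
  have "a \<notin> \<int>\<^sub>\<le>\<^sub>0" "a + b \<notin> \<int>\<^sub>\<le>\<^sub>0"
    using assms nonpos_Ints_nonpos by fastforce+
  then have "pochhammer a k = Gamma (a + k) / Gamma a" "pochhammer (a + b) k = Gamma (a + b + k) / Gamma (a + b)"
    by (simp_all add: pochhammer_Gamma)
  moreover have "Gamma a > 0" "Gamma (a + b) > 0" "Gamma (a + b + k) > 0"
    using assms by (simp_all add: Gamma_real_pos)
  ultimately show ?thesis
    by (simp add: Beta_def field_simps add_ac)
qed

lemma Beta_half_pochhammer_double:
  fixes v :: real
  assumes "v > 0"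
  shows "pochhammer v (2 * k) / fact (2 * k) * Beta (real k + 1 / 2) v
         = Beta (1 / 2) v * hyp2F1_coeff (v / 2) ((v + 1) / 2) (v + 1 / 2) k"
proof -
  have "pochhammer v (2 * k) / fact (2 * k) * Beta (real k + 1 / 2) v
        = pochhammer v (2 * k) / fact (2 * k) * pochhammer (1 / 2) k * Beta (1 / 2) v / pochhammer (v + 1 / 2) k"
    using Beta_add_nat_left[of "1 / 2" v k] assms by (simp add: add.commute)
  also have "\<dots> = pochhammer (v / 2) k * pochhammer ((v + 1) / 2) k / fact k * Beta (1 / 2) v / pochhammer (v + 1 / 2) k"
    by (simp only: pochhammer_double_div_fact)
  finally show ?thesis
    by (simp add: hyp2F1_coeff_def mult_ac)
qed

section \<open>Integrals along a chord\<close>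

lemma power2_powr:
  fixes x a :: real
  assumes "0 < x"
  shows "(x\<^sup>2) powr a = x powr (2 * a)"
proof -
  have "x\<^sup>2 = x powr 2"
    using assms by simp
  then show ?thesis
    by (simp only: powr_powr)
qed

lemma nn_integral_symmetrize:
  fixes f :: "real \<Rightarrow> real"
  assumes [measurable]: "f \<in> borel_measurable borel" and nonneg: "\<And>x. 0 \<le> f x"
  shows "(\<integral>\<^sup>+x\<in>{-r<..<r}. ennreal (f x) \<partial>lborel) = (\<integral>\<^sup>+x\<in>{-r<..<r}. ennreal ((f x + f (- x)) / 2) \<partial>lborel)"
proof -
  have half: "ennreal ((a + b) / 2) = ennreal (a / 2) + ennreal (b / 2)" if "0 \<le> a" "0 \<le> b" for a b :: real
    using that by (simp add: add_divide_distrib flip: ennreal_plus)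
  have "(\<integral>\<^sup>+x\<in>{-r<..<r}. ennreal ((f x + f (- x)) / 2) \<partial>lborel)
        = (\<integral>\<^sup>+x\<in>{-r<..<r}. ennreal (f x / 2) \<partial>lborel) + (\<integral>\<^sup>+x\<in>{-r<..<r}. ennreal (f (- x) / 2) \<partial>lborel)"
    unfolding half[OF nonneg nonneg] distrib_right by (rule nn_integral_add; measurable)
  also have "(\<integral>\<^sup>+x\<in>{-r<..<r}. ennreal (f (- x) / 2) \<partial>lborel) = (\<integral>\<^sup>+x\<in>{-r<..<r}. ennreal (f x / 2) \<partial>lborel)"
    by (rule nn_integral_reflect_symmetric_interval[where f = "\<lambda>x. ennreal (f x / 2)"]) measurable
  also have "(\<integral>\<^sup>+x\<in>{-r<..<r}. ennreal (f x / 2) \<partial>lborel) + (\<integral>\<^sup>+x\<in>{-r<..<r}. ennreal (f x / 2) \<partial>lborel)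
      = (\<integral>\<^sup>+x\<in>{-r<..<r}. ennreal ((f x + f x) / 2) \<partial>lborel)"
    unfolding half[OF nonneg nonneg] distrib_right by (rule nn_integral_add[symmetric]; measurable)
  finally show ?thesis
    by simp
qed

lemma nn_integral_sums:
  fixes f :: "nat \<Rightarrow> 'a \<Rightarrow> real"
  assumes [measurable]: "\<And>k. f k \<in> borel_measurable M" "A \<in> sets M"
    and nonneg: "\<And>k x. x \<in> A \<Longrightarrow> 0 \<le> f k x" and sums: "\<And>x. x \<in> A \<Longrightarrow> (\<lambda>k. f k x) sums g x"
  shows "(\<integral>\<^sup>+x\<in>A. ennreal (g x) \<partial>M) = (\<Sum>k. \<integral>\<^sup>+x\<in>A. ennreal (f k x) \<partial>M)"
proof -
  have "ennreal (g x) * indicator A x = (\<Sum>k. ennreal (f k x) * indicator A x)" for x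
  proof (cases "x \<in> A")
    case True
    then show ?thesis
      using suminf_ennreal2[OF nonneg sums_summable[OF sums]] sums_unique[OF sums] by simp
  qed simp
  then show ?thesis
    by (simp only:) (rule nn_integral_suminf, measurable)
qed

lemma powr_Beta_substitution:
  fixes e r u :: real
  assumes u: "0 < u" "u \<le> r"
  shows "r powr (2 * e + real (2 * k) + 1) * (((u / r)\<^sup>2) powr (real k + 1 / 2 - 1) * (1 - (u / r)\<^sup>2) powr (e + 1 - 1)
           * (2 * u / r\<^sup>2))
         = 2 * ((r\<^sup>2 - u\<^sup>2) powr e * u ^ (2 * k))"
proof -
  have r: "0 < r"
    using u by linarith
  have "(u / r)\<^sup>2 powr (real k + 1 / 2 - 1) = (u / r) powr (real (2 * k) - 1)"
    using u r by (simp add: power2_powr algebra_simps)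
  also have "\<dots> = u ^ (2 * k) / r ^ (2 * k) * (r / u)"
    using u r powr_realpow[of "u / r" "2 * k"] by (simp add: powr_diff power_divide)
  finally have 1: "(u / r)\<^sup>2 powr (real k + 1 / 2 - 1) = u ^ (2 * k) / r ^ (2 * k) * (r / u)" .
  have "1 - (u / r)\<^sup>2 = (r\<^sup>2 - u\<^sup>2) / r\<^sup>2"
    using r by (simp add: field_simps)
  moreover have "0 \<le> r\<^sup>2 - u\<^sup>2"
    using u by (simp add: power_mono)
  ultimately have 2: "(1 - (u / r)\<^sup>2) powr (e + 1 - 1) = (r\<^sup>2 - u\<^sup>2) powr e / r powr (2 * e)"
    using r by (simp add: powr_divide power2_powr)
  have 3: "r powr (2 * e + real (2 * k) + 1) = r powr (2 * e) * r ^ (2 * k) * r"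
    using r powr_realpow[of r "2 * k"] by (simp add: powr_add)
  have "r powr (2 * e + real (2 * k) + 1) * (((u / r)\<^sup>2) powr (real k + 1 / 2 - 1) * (1 - (u / r)\<^sup>2) powr (e + 1 - 1)
          * (2 * u / r\<^sup>2))
      = (r powr (2 * e) * ((r\<^sup>2 - u\<^sup>2) powr e / r powr (2 * e)))
        * (r ^ (2 * k) * (u ^ (2 * k) / r ^ (2 * k))) * (r * (r / u) * (2 * u / r\<^sup>2))"
    unfolding 1 2 3 by (simp only: mult_ac)
  also have "\<dots> = 2 * ((r\<^sup>2 - u\<^sup>2) powr e * u ^ (2 * k))"
    using u r by (simp add: power2_eq_square)
  finally show ?thesis .
qed

lemma nn_integral_Beta_moment_half:
  fixes e r :: real
  assumes e: "e > -1" and r: "r > 0"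
  shows "ennreal (r powr (2 * e + real (2 * k) + 1) * Beta (real k + 1 / 2) (e + 1))
         = 2 * (\<integral>\<^sup>+u\<in>{0..r}. ennreal ((r\<^sup>2 - u\<^sup>2) powr e * u ^ (2 * k)) \<partial>lborel)"
proof -
  define F where "F t = t powr (real k + 1 / 2 - 1) * (1 - t) powr (e + 1 - 1)" for t :: real
  define g where "g u = (u / r)\<^sup>2" for u
  define c where "c = r powr (2 * e + real (2 * k) + 1)"
  have [measurable]: "F \<in> borel_measurable borel"
    unfolding F_def by measurable
  have "(F has_integral Beta (real k + 1 / 2) (e + 1)) {0..1}"
    unfolding F_def using e by (intro has_integral_Beta_real) simp_all
  then have "(\<integral>\<^sup>+t\<in>{0..1}. ennreal (F t) \<partial>lborel) = ennreal (Beta (real k + 1 / 2) (e + 1))"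
    by (intro nn_integral_has_integral_lebesgue'[where f = F and \<Omega> = "{0..1}"]) (simp add: F_def)
  moreover have "g 0 = 0" "g r = 1"
    using r by (simp_all add: g_def)
  ultimately have "ennreal (Beta (real k + 1 / 2) (e + 1)) = (\<integral>\<^sup>+t\<in>{g 0..g r}. ennreal (F t) \<partial>lborel)"
    by (simp only:)
  also have "\<dots> = (\<integral>\<^sup>+t. ennreal (F t * indicator {g 0..g r} t) \<partial>lborel)"
    by (intro nn_integral_cong) (simp add: indicator_def)
  also have "\<dots> = (\<integral>\<^sup>+u. ennreal (F (g u) * (2 * u / r\<^sup>2) * indicator {0..r} u) \<partial>lborel)"
  proof (rule nn_integral_substitution[where g' = "\<lambda>u. 2 * u / r\<^sup>2"])
    show "set_borel_measurable borel {g 0..g r} F"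
      unfolding set_borel_measurable_def by measurable
    show "(g has_real_derivative 2 * u / r\<^sup>2) (at u)" for u
      unfolding g_def using r
      by (auto intro!: derivative_eq_intros simp: field_simps power2_eq_square)
  qed (use r in \<open>auto intro!: continuous_intros\<close>)
  finally have "ennreal (c * Beta (real k + 1 / 2) (e + 1))
      = ennreal c * (\<integral>\<^sup>+u. ennreal (F (g u) * (2 * u / r\<^sup>2) * indicator {0..r} u) \<partial>lborel)"
    by (simp add: c_def ennreal_mult')
  also have "\<dots> = (\<integral>\<^sup>+u. ennreal c * ennreal (F (g u) * (2 * u / r\<^sup>2) * indicator {0..r} u) \<partial>lborel)"
    by (rule nn_integral_cmult[symmetric]) (simp add: g_def)
  also have "\<dots> = (\<integral>\<^sup>+u\<in>{0..r}. ennreal (2 * ((r\<^sup>2 - u\<^sup>2) powr e * u ^ (2 * k))) \<partial>lborel)"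
  proof (rule nn_integral_cong_AE)
    show "AE u in lborel. ennreal c * ennreal (F (g u) * (2 * u / r\<^sup>2) * indicator {0..r} u)
        = ennreal (2 * ((r\<^sup>2 - u\<^sup>2) powr e * u ^ (2 * k))) * indicator {0..r} u"
      using AE_lborel_singleton[of 0]
    proof eventually_elim
      case (elim u)
      have "0 \<le> c"
        by (simp add: c_def)
      then show ?case
        using elim powr_Beta_substitution[of u r e k]
        by (auto simp: F_def g_def c_def indicator_def simp flip: ennreal_mult')
    qed
  qed
  also have "\<dots> = 2 * (\<integral>\<^sup>+u\<in>{0..r}. ennreal ((r\<^sup>2 - u\<^sup>2) powr e * u ^ (2 * k)) \<partial>lborel)"
    by (simp add: ennreal_mult' nn_integral_cmult mult.assoc)
  finally show ?thesis
    by (simp only: c_def)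
qed

lemma nn_integral_Beta_moment:
  fixes e r :: real
  assumes "e > -1" and "r > 0"
  shows "(\<integral>\<^sup>+Y\<in>{-r<..<r}. ennreal ((r\<^sup>2 - Y\<^sup>2) powr e * Y ^ (2 * k)) \<partial>lborel)
         = ennreal (r powr (2 * e + real (2 * k) + 1) * Beta (real k + 1 / 2) (e + 1))"
  unfolding nn_integral_Beta_moment_half[OF assms]
  by (rule nn_integral_even_symmetric_interval) simp_all

lemma chord_hyp2F1_arg_bounds:
  fixes s r A :: real
  assumes r: "r > 0" and A: "2 * \<bar>s\<bar> * r < A"
  shows "0 \<le> 4 * s\<^sup>2 * r\<^sup>2 / A\<^sup>2" and "4 * s\<^sup>2 * r\<^sup>2 / A\<^sup>2 < 1"
proof -
  have "0 \<le> 2 * \<bar>s\<bar> * r"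
    using r by simp
  then have "A > 0"
    using A by linarith
  then have "0 \<le> 2 * \<bar>s\<bar> * r / A" "2 * \<bar>s\<bar> * r / A < 1"
    using A r by simp_all
  moreover have "4 * s\<^sup>2 * r\<^sup>2 / A\<^sup>2 = (2 * \<bar>s\<bar> * r / A)\<^sup>2"
    by (simp add: power_mult_distrib power_divide)
  ultimately show "0 \<le> 4 * s\<^sup>2 * r\<^sup>2 / A\<^sup>2" "4 * s\<^sup>2 * r\<^sup>2 / A\<^sup>2 < 1"
    by (simp_all add: power_less_one_iff)
qed

lemma nn_integral_chord_binomial_term:
  fixes v s A r :: real
  assumes v: "v > 0" and r: "r > 0"
  shows "(\<integral>\<^sup>+Y\<in>{-r<..<r}. ennreal ((r\<^sup>2 - Y\<^sup>2) powr (v - 1)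
            * (pochhammer v (2 * k) / fact (2 * k) * A powr (- v) * (2 * s * Y / A) ^ (2 * k))) \<partial>lborel)
       = ennreal (Beta (1 / 2) v * (r\<^sup>2) powr (v - 1 / 2) * A powr (- v)
                  * (hyp2F1_coeff (v / 2) ((v + 1) / 2) (v + 1 / 2) k * (4 * s\<^sup>2 * r\<^sup>2 / A\<^sup>2) ^ k))"
proof -
  define c where "c = pochhammer v (2 * k) / fact (2 * k) * A powr (- v) * (2 * s / A) ^ (2 * k)"
  define R where "R = r powr (2 * (v - 1) + real (2 * k) + 1)"
  have c_nonneg: "0 \<le> c"
    using v by (simp add: c_def power_mult pochhammer_nonneg)
  have "(r\<^sup>2 - Y\<^sup>2) powr (v - 1) * (pochhammer v (2 * k) / fact (2 * k) * A powr (- v) * (2 * s * Y / A) ^ (2 * k))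
        = c * ((r\<^sup>2 - Y\<^sup>2) powr (v - 1) * Y ^ (2 * k))" for Y
    by (simp add: c_def power_mult_distrib power_divide mult_ac)
  then have "(\<integral>\<^sup>+Y\<in>{-r<..<r}. ennreal ((r\<^sup>2 - Y\<^sup>2) powr (v - 1)
            * (pochhammer v (2 * k) / fact (2 * k) * A powr (- v) * (2 * s * Y / A) ^ (2 * k))) \<partial>lborel)
      = (\<integral>\<^sup>+Y. ennreal c * (ennreal ((r\<^sup>2 - Y\<^sup>2) powr (v - 1) * Y ^ (2 * k)) * indicator {-r<..<r} Y) \<partial>lborel)"
    using c_nonneg by (simp add: ennreal_mult' mult.assoc)
  also have "\<dots> = ennreal c * (\<integral>\<^sup>+Y\<in>{-r<..<r}. ennreal ((r\<^sup>2 - Y\<^sup>2) powr (v - 1) * Y ^ (2 * k)) \<partial>lborel)"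
    by (rule nn_integral_cmult) measurable
  also have "\<dots> = ennreal c * ennreal (R * Beta (real k + 1 / 2) v)"
    using nn_integral_Beta_moment[of "v - 1" r k] v r by (simp add: R_def)
  also have "\<dots> = ennreal (c * (R * Beta (real k + 1 / 2) v))"
    by (rule ennreal_mult'[symmetric]) (rule c_nonneg)
  also have "c * (R * Beta (real k + 1 / 2) v)
      = Beta (1 / 2) v * (r\<^sup>2) powr (v - 1 / 2) * A powr (- v)
        * (hyp2F1_coeff (v / 2) ((v + 1) / 2) (v + 1 / 2) k * (4 * s\<^sup>2 * r\<^sup>2 / A\<^sup>2) ^ k)"
  proof -
    have "2 * (v - 1) + real (2 * k) + 1 = 2 * (v - 1 / 2) + real (2 * k)"
      by simp
    then have R: "R = (r\<^sup>2) powr (v - 1 / 2) * r ^ (2 * k)"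
      unfolding R_def by (simp only: powr_add powr_realpow[OF r] power2_powr[OF r])
    have Z: "(2 * s / A) ^ (2 * k) * r ^ (2 * k) = (4 * s\<^sup>2 * r\<^sup>2 / A\<^sup>2) ^ k"
      by (simp add: power_mult power_mult_distrib power_divide)
    have "c * (R * Beta (real k + 1 / 2) v)
        = (pochhammer v (2 * k) / fact (2 * k) * Beta (real k + 1 / 2) v) * A powr (- v)
          * (r\<^sup>2) powr (v - 1 / 2) * ((2 * s / A) ^ (2 * k) * r ^ (2 * k))"
      unfolding c_def R by (simp only: mult_ac)
    then show ?thesis
      unfolding Beta_half_pochhammer_double[OF v] Z by (simp only: mult_ac)
  qed
  finally show ?thesis .
qed

lemma nn_integral_chord_hyp2F1:
  fixes v s A r :: real
  assumes v: "v > 0" and r: "r > 0" and A: "2 * \<bar>s\<bar> * r < A"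
  shows "(\<integral>\<^sup>+Y\<in>{-r<..<r}. ennreal ((r\<^sup>2 - Y\<^sup>2) powr (v - 1) * (A - 2 * s * Y) powr (- v)) \<partial>lborel)
       = ennreal (Beta (1 / 2) v * (r\<^sup>2) powr (v - 1 / 2) * A powr (- v)
                  * hyp2F1 (v / 2) ((v + 1) / 2) (v + 1 / 2) (4 * s\<^sup>2 * r\<^sup>2 / A\<^sup>2))"
proof -
  define I where "I = {-r<..<r}"
  define G where "G Y = (r\<^sup>2 - Y\<^sup>2) powr (v - 1) * (A - 2 * s * Y) powr (- v)" for Y
  define T where "T k Y = (r\<^sup>2 - Y\<^sup>2) powr (v - 1)
      * (pochhammer v (2 * k) / fact (2 * k) * A powr (- v) * (2 * s * Y / A) ^ (2 * k))" for k Y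
  define z where "z = 4 * s\<^sup>2 * r\<^sup>2 / A\<^sup>2"
  define C where "C = Beta (1 / 2) v * (r\<^sup>2) powr (v - 1 / 2) * A powr (- v)"
  define F where "F = hyp2F1_coeff (v / 2) ((v + 1) / 2) (v + 1 / 2)"
  have [measurable]: "G \<in> borel_measurable borel" "\<And>k. T k \<in> borel_measurable borel"
    unfolding G_def T_def by simp_all
  have series: "(\<lambda>k. T k Y) sums ((G Y + G (- Y)) / 2)" if "Y \<in> I" for Y
  proof -
    have "\<bar>Y\<bar> \<le> r"
      using that by (auto simp: I_def)
    then have "\<bar>2 * s * Y\<bar> \<le> 2 * \<bar>s\<bar> * r"
      by (simp add: abs_mult mult_left_mono)
    then have "\<bar>2 * s * Y\<bar> < A"
      using A by linarith
    from sums_mult[OF binomial_series_even_part[OF this, of v], of "(r\<^sup>2 - Y\<^sup>2) powr (v - 1)"]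
    show ?thesis
      by (simp add: T_def G_def distrib_left mult_ac)
  qed
  have summable: "summable (\<lambda>k. F k * z ^ k)"
    unfolding F_def z_def using v chord_hyp2F1_arg_bounds[OF r A]
    by (intro summable_hyp2F1) (auto simp: field_simps)
  have C_nonneg: "0 \<le> C"
    using v by (simp add: C_def Beta_def Gamma_real_pos less_imp_le)
  have "(\<integral>\<^sup>+Y\<in>I. ennreal (G Y) \<partial>lborel) = (\<integral>\<^sup>+Y\<in>I. ennreal ((G Y + G (- Y)) / 2) \<partial>lborel)"
    unfolding I_def by (rule nn_integral_symmetrize) (simp_all add: G_def)
  also have "\<dots> = (\<Sum>k. \<integral>\<^sup>+Y\<in>I. ennreal (T k Y) \<partial>lborel)"
    using series v by (intro nn_integral_sums) (simp_all add: I_def T_def power_mult pochhammer_nonneg)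
  also have "\<dots> = (\<Sum>k. ennreal (C * (F k * z ^ k)))"
    unfolding T_def I_def nn_integral_chord_binomial_term[OF v r] by (simp add: C_def F_def z_def)
  also have "\<dots> = ennreal (\<Sum>k. C * (F k * z ^ k))"
    using summable C_nonneg v chord_hyp2F1_arg_bounds[OF r A]
    by (intro suminf_ennreal2 summable_mult mult_nonneg_nonneg) (auto simp: F_def z_def hyp2F1_coeff_nonneg)
  also have "\<dots> = ennreal (C * hyp2F1 (v / 2) ((v + 1) / 2) (v + 1 / 2) z)"
    using summable by (simp add: suminf_mult hyp2F1_altdef F_def)
  finally show ?thesis
    by (simp add: G_def C_def z_def I_def)
qed

section \<open>The disc kernel\<close>

definition disc_kernel :: "real \<Rightarrow> real \<times> real \<Rightarrow> real \<times> real \<Rightarrow> real" where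
  "disc_kernel v p q = indicator (ball 0 1) q *
     ((1 - (norm q)\<^sup>2) powr (v - 1) * (1 + (norm p)\<^sup>2 - 2 * (p \<bullet> q)) powr (- v))"

definition disc_kernel_marginal :: "real \<Rightarrow> real \<times> real \<Rightarrow> real \<Rightarrow> real" where
  "disc_kernel_marginal v p x =
     (1 - x\<^sup>2) powr (v - 1 / 2) * (1 + (norm p)\<^sup>2 - 2 * fst p * x) powr (- v) *
     hyp2F1 (v / 2) ((v + 1) / 2) (v + 1 / 2)
       (4 * (snd p)\<^sup>2 * (1 - x\<^sup>2) / (1 + (norm p)\<^sup>2 - 2 * fst p * x)\<^sup>2)"

lemma norm_Pair_power2: "(norm (a, b))\<^sup>2 = a\<^sup>2 + b\<^sup>2"
  for a b :: real
  by (simp add: norm_Pair)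

lemma disc_kernel_measurable [measurable]: "disc_kernel v p \<in> borel_measurable borel"
proof -
  have [measurable]: "ball (0 :: real \<times> real) 1 \<in> sets borel"
    by (simp add: borel_open)
  show ?thesis
    unfolding disc_kernel_def[abs_def] by measurable
qed

lemma disc_kernel_marginal_measurable [measurable]: "disc_kernel_marginal v p \<in> borel_measurable borel"
  unfolding disc_kernel_marginal_def[abs_def] by measurable

lemma disc_kernel_rotate2: "disc_kernel v (rotate2 \<theta> p) (rotate2 \<theta> q) = disc_kernel v p q"
  by (simp add: disc_kernel_def indicator_def)

lemma nn_integral_disc_kernel_rotate2:
  "(\<integral>\<^sup>+q. ennreal (disc_kernel v (rotate2 \<theta> p) q) \<partial>lborel) = (\<integral>\<^sup>+q. ennreal (disc_kernel v p q) \<partial>lborel)"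
proof -
  have "(\<integral>\<^sup>+q. ennreal (disc_kernel v (rotate2 \<theta> p) q) \<partial>lborel)
        = (\<integral>\<^sup>+q. ennreal (disc_kernel v (rotate2 \<theta> p) (rotate2 \<theta> q)) \<partial>lborel)"
    by (rule nn_integral_lborel_rotate2[symmetric]) measurable
  then show ?thesis
    by (simp only: disc_kernel_rotate2)
qed

lemma kernel_base_gt_chord:
  fixes t s x :: real
  assumes "x\<^sup>2 < 1" and "(t, \<bar>s\<bar>) \<noteq> (x, sqrt (1 - x\<^sup>2))"
  shows "2 * \<bar>s\<bar> * sqrt (1 - x\<^sup>2) < 1 + t\<^sup>2 + s\<^sup>2 - 2 * t * x"
proof -
  define r where "r = sqrt (1 - x\<^sup>2)"
  have "r\<^sup>2 = 1 - x\<^sup>2"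
    using assms(1) by (simp add: r_def)
  then have "1 + t\<^sup>2 + s\<^sup>2 - 2 * t * x - 2 * \<bar>s\<bar> * r = (t - x)\<^sup>2 + (\<bar>s\<bar> - r)\<^sup>2"
    by (simp add: power2_diff algebra_simps)
  moreover have "0 < (t - x)\<^sup>2 + (\<bar>s\<bar> - r)\<^sup>2"
    using assms(2) by (auto simp: r_def sum_power2_gt_zero_iff)
  ultimately show ?thesis
    by (simp add: r_def)
qed

lemma disc_kernel_chord:
  fixes r x t s Y :: real
  assumes r: "r > 0" and r2: "r\<^sup>2 = 1 - x\<^sup>2"
  shows "disc_kernel v (t, s) (x, Y) = indicator {-r<..<r} Y
           * ((r\<^sup>2 - Y\<^sup>2) powr (v - 1) * (1 + t\<^sup>2 + s\<^sup>2 - 2 * t * x - 2 * s * Y) powr (- v))"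
proof -
  have "(x, Y) \<in> ball 0 1 \<longleftrightarrow> Y\<^sup>2 < r\<^sup>2"
    using r2 by (auto simp: norm_Pair)
  also have "\<dots> \<longleftrightarrow> \<bar>Y\<bar> < r"
    using r abs_le_square_iff[of r Y] by (simp add: not_le[symmetric])
  also have "\<dots> \<longleftrightarrow> Y \<in> {-r<..<r}"
    by (auto simp: abs_less_iff)
  finally show ?thesis
    by (simp add: disc_kernel_def indicator_def norm_Pair_power2 r2 inner_Pair inner_real_def
        algebra_simps)
qed

lemma
  fixes v x :: real and p :: "real \<times> real"
  assumes v: "v > 0" and x: "x\<^sup>2 < 1" and p: "(fst p, \<bar>snd p\<bar>) \<noteq> (x, sqrt (1 - x\<^sup>2))"
  shows nn_integral_disc_kernel_section:
      "(\<integral>\<^sup>+Y. ennreal (disc_kernel v p (x, Y)) \<partial>lborel) = ennreal (Beta (1 / 2) v * disc_kernel_marginal v p x)"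
    and disc_kernel_marginal_nonneg: "0 \<le> disc_kernel_marginal v p x"
proof -
  obtain t s where p_eq: "p = (t, s)"
    by (cases p)
  define r where "r = sqrt (1 - x\<^sup>2)"
  define A where "A = 1 + t\<^sup>2 + s\<^sup>2 - 2 * t * x"
  have r: "r > 0" and r2: "r\<^sup>2 = 1 - x\<^sup>2"
    using x by (simp_all add: r_def)
  have gap: "2 * \<bar>s\<bar> * r < A"
    using kernel_base_gt_chord[OF x] p by (simp add: p_eq r_def A_def)
  have marginal: "disc_kernel_marginal v p x = (r\<^sup>2) powr (v - 1 / 2) * A powr (- v) *
      hyp2F1 (v / 2) ((v + 1) / 2) (v + 1 / 2) (4 * s\<^sup>2 * r\<^sup>2 / A\<^sup>2)"
    by (simp add: disc_kernel_marginal_def p_eq norm_Pair_power2 A_def r2 mult_ac add.assoc)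
  have "(\<integral>\<^sup>+Y. ennreal (disc_kernel v p (x, Y)) \<partial>lborel)
      = (\<integral>\<^sup>+Y\<in>{-r<..<r}. ennreal ((r\<^sup>2 - Y\<^sup>2) powr (v - 1) * (A - 2 * s * Y) powr (- v)) \<partial>lborel)"
    by (intro nn_integral_cong) (simp add: disc_kernel_chord[OF r r2] p_eq A_def indicator_def)
  also have "\<dots> = ennreal (Beta (1 / 2) v * disc_kernel_marginal v p x)"
    using nn_integral_chord_hyp2F1[OF v r gap] by (simp add: marginal mult_ac)
  finally show "(\<integral>\<^sup>+Y. ennreal (disc_kernel v p (x, Y)) \<partial>lborel) = ennreal (Beta (1 / 2) v * disc_kernel_marginal v p x)" .
  show "0 \<le> disc_kernel_marginal v p x"
    unfolding marginal using v chord_hyp2F1_arg_bounds[OF r gap] by (intro mult_nonneg_nonneg hyp2F1_nonneg) (simp_all add: field_simps)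
qed

lemma nn_integral_disc_kernel:
  assumes v: "v > 0"
  shows "(\<integral>\<^sup>+q. ennreal (disc_kernel v p q) \<partial>lborel)
         = ennreal (Beta (1 / 2) v) * (\<integral>\<^sup>+x\<in>{-1..1}. ennreal (disc_kernel_marginal v p x) \<partial>lborel)"
proof -
  have "(\<integral>\<^sup>+q. ennreal (disc_kernel v p q) \<partial>lborel)
        = (\<integral>\<^sup>+q. ennreal (disc_kernel v p q) \<partial>(lborel \<Otimes>\<^sub>M lborel))"
    by (simp add: lborel_prod)
  also have "\<dots> = (\<integral>\<^sup>+x. \<integral>\<^sup>+Y. ennreal (disc_kernel v p (x, Y)) \<partial>lborel \<partial>lborel)"
    by (rule lborel.nn_integral_fst[symmetric]) (simp add: lborel_prod measurable_lborel1)
  also have "\<dots> = (\<integral>\<^sup>+x. ennreal (Beta (1 / 2) v) * (ennreal (disc_kernel_marginal v p x) * indicator {-1..1} x) \<partial>lborel)"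
  proof (rule nn_integral_cong_AE)
    have "AE x in lborel. x \<noteq> -1 \<and> x \<noteq> 1 \<and> x \<noteq> fst p"
      using AE_lborel_singleton[of "-1"] AE_lborel_singleton[of 1] AE_lborel_singleton[of "fst p"]
      by eventually_elim auto
    then show "AE x in lborel. (\<integral>\<^sup>+Y. ennreal (disc_kernel v p (x, Y)) \<partial>lborel)
        = ennreal (Beta (1 / 2) v) * (ennreal (disc_kernel_marginal v p x) * indicator {-1..1} x)"
    proof eventually_elim
      case (elim x)
      show ?case
      proof (cases "x\<^sup>2 < 1")
        case True
        then have "x \<in> {-1..1}"
          by (auto simp: abs_square_less_1 abs_less_iff)
        moreover have "0 \<le> Beta (1 / 2) v"
          using v by (simp add: Beta_def Gamma_real_pos less_imp_le)
        ultimately show ?thesis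
          using nn_integral_disc_kernel_section[OF v True] elim by (simp add: ennreal_mult')
      next
        case False
        then have "x \<notin> {-1..1}"
          using elim by (auto simp: abs_square_less_1 abs_le_iff)
        moreover have "disc_kernel v p (x, Y) = 0" for Y
        proof -
          have "\<not> x\<^sup>2 + Y\<^sup>2 < 1"
            using False zero_le_power2[of Y] by linarith
          then show ?thesis
            by (simp add: disc_kernel_def norm_Pair)
        qed
        ultimately show ?thesis
          by simp
      qed
    qed
  qed
  also have "\<dots> = ennreal (Beta (1 / 2) v) * (\<integral>\<^sup>+x\<in>{-1..1}. ennreal (disc_kernel_marginal v p x) \<partial>lborel)"
    by (rule nn_integral_cmult) measurable
  finally show ?thesis .
qed

lemma integral_disc_kernel_marginal:
  assumes v: "v > 0"
  shows "integral {-1..1} (disc_kernel_marginal v p)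
         = enn2real (\<integral>\<^sup>+q. ennreal (disc_kernel v p q) \<partial>lborel) / Beta (1 / 2) v"
proof -
  have B: "Beta (1 / 2) v > 0"
    using v by (simp add: Beta_def Gamma_real_pos)
  have "AE x in lborel. x \<in> {-1..1} \<longrightarrow> 0 \<le> disc_kernel_marginal v p x"
    using AE_lborel_singleton[of "-1"] AE_lborel_singleton[of 1] AE_lborel_singleton[of "fst p"]
  proof eventually_elim
    case (elim x)
    then show ?case
      using disc_kernel_marginal_nonneg[OF v, of x p]
      by (auto simp: abs_square_less_1 abs_less_iff)
  qed
  then have "integral {-1..1} (disc_kernel_marginal v p)
      = enn2real (\<integral>\<^sup>+x\<in>{-1..1}. ennreal (disc_kernel_marginal v p x) \<partial>lborel)"
    by (intro integral_eq_enn2real_nn_integral) measurable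
  also have "\<dots> = enn2real (\<integral>\<^sup>+q. ennreal (disc_kernel v p q) \<partial>lborel) / Beta (1 / 2) v"
    using B by (simp add: nn_integral_disc_kernel[OF v] enn2real_mult)
  finally show ?thesis .
qed

theorem lemma3:
  fixes n :: nat and \<rho> \<alpha> :: real
  assumes "n \<ge> 3" and "0 \<le> \<rho>" and "\<rho> \<le> 1" and "0 \<le> \<alpha>" and "\<alpha> \<le> pi / 2"
  shows "integral {-1..1} (\<lambda>x::real.
            (1 - x^2) powr ((real n - 3) / 2)
            / (1 + \<rho>^2 - 2 * \<rho> * x * cos \<alpha>) powr (real n / 2 - 1)
            * hyp2F1 ((real n - 2) / 4) (real n / 4) ((real n - 1) / 2)
                (4 * \<rho>^2 * (sin \<alpha>)^2 * (1 - x^2) / (1 + \<rho>^2 - 2 * \<rho> * x * cos \<alpha>)^2))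
       = integral {-1..1} (\<lambda>x::real.
            (1 - x^2) powr ((real n - 3) / 2) * (1 - 2 * \<rho> * x + \<rho>^2) powr (1 - real n / 2))"
proof -
  define v where "v = real n / 2 - 1"
  have v: "v > 0"
    using assms(1) by (simp add: v_def)
  have exponents: "(real n - 3) / 2 = v - 1 / 2" "1 - real n / 2 = - v"
      "(real n - 2) / 4 = v / 2" "real n / 4 = (v + 1) / 2" "(real n - 1) / 2 = v + 1 / 2"
    by (simp_all add: v_def field_simps)
  have rotated: "(norm (rotate2 \<alpha> (\<rho>, 0)))\<^sup>2 = \<rho>\<^sup>2"
      "2 * fst (rotate2 \<alpha> (\<rho>, 0)) * x = 2 * \<rho> * x * cos \<alpha>"
      "4 * (snd (rotate2 \<alpha> (\<rho>, 0)))\<^sup>2 = 4 * \<rho>\<^sup>2 * (sin \<alpha>)\<^sup>2" for x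
    by (simp_all add: rotate2_def norm_Pair_power2 power_mult_distrib sin_cos_squared_add2 mult_ac
        flip: distrib_left)
  have lhs: "(\<lambda>x. (1 - x^2) powr ((real n - 3) / 2) / (1 + \<rho>^2 - 2 * \<rho> * x * cos \<alpha>) powr (real n / 2 - 1)
          * hyp2F1 ((real n - 2) / 4) (real n / 4) ((real n - 1) / 2)
              (4 * \<rho>^2 * (sin \<alpha>)^2 * (1 - x^2) / (1 + \<rho>^2 - 2 * \<rho> * x * cos \<alpha>)^2))
      = disc_kernel_marginal v (rotate2 \<alpha> (\<rho>, 0))"
    unfolding disc_kernel_marginal_def[abs_def] rotated exponents v_def[symmetric]
    unfolding powr_minus divide_inverse ..
  have unrotated: "1 + (norm (\<rho>, 0))\<^sup>2 - 2 * fst (\<rho>, 0) * x = 1 - 2 * \<rho> * x + \<rho>\<^sup>2" for x :: real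
    by (simp add: norm_Pair_power2)
  have rhs: "(\<lambda>x. (1 - x^2) powr ((real n - 3) / 2) * (1 - 2 * \<rho> * x + \<rho>^2) powr (1 - real n / 2))
      = disc_kernel_marginal v (\<rho>, 0)"
    unfolding disc_kernel_marginal_def[abs_def] exponents unrotated by simp
  show ?thesis
    unfolding lhs rhs integral_disc_kernel_marginal[OF v] nn_integral_disc_kernel_rotate2 ..
qed

end
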